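(* Let $IS\in\{\Box,\blacksquare\}$ and let $\tau$ be a correct compositional translation from $\mathrm{SYNCSIMPLE}$ into $\mathrm{LOCKSIMPLE}_{1,IS}$. Then each of the words $\tau(!)$ and $\tau(?)$ either starts with $P_1$ or contains the factor $P_1P_1$ (two consecutive occurrences of $P_1$).
   Context: $\mathrm{SYNCSIMPLE}$: subprocesses $\mathcal{U} ::= \checkmark \mid 0 \mid\, !\mathcal{U} \mid\, ?\mathcal{U}$; processes are finite parallel compositions ($\mid$ associative, commutative, $0$ a unit). Reduction: $!\mathcal{U}_1\mid ?\mathcal{U}_2\mid \mathcal{P}\to \mathcal{U}_1\mid\mathcal{U}_2\mid\mathcal{P}$. Successful: of form $\checkmark\mid\mathcal{P}$; may-convergent: reduces to a successful process; must-convergent: every reachable process is may-convergent. $\mathrm{LOCKSIMPLE}_{k,IS}$ ($IS\in\{\Box,\blacksquare\}^k$, $\Box$ empty, $\blacksquare$ full): subprocesses are words over $\{P_1,T_1,\dots,P_k,T_k\}$ followed by $0$ or $\checkmark$; states $(\mathcal{P},C)$ reduce by $(P_i\mathcal{U}\mid\mathcal{P},C)\to(\mathcal{U}\mid\mathcal{P},C[C_i:=\blacksquare])$ only if $C_i=\Box$, and $(T_i\mathcal{U}\mid\mathcal{P},C)\to(\mathcal{U}\mid\mathcal{P},C[C_i:=\Box])$ always. Success = process contains $\checkmark$; a process $\mathcal{P}$ is may/must-convergent iff the state $(\mathcal{P},IS)$ is. A compositional translation $\tau$ is given by words $\tau(!),\tau(?)$ with $\tau(0)=0$, $\tau(\checkmark)=\checkmark$,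 $\tau(!\mathcal{U})=\tau(!)\tau(\mathcal{U})$, $\tau(?\mathcal{U})=\tau(?)\tau(\mathcal{U})$, $\tau$ commuting with $\mid$; correct = preserves and reflects may- and must-convergence. *)

theory Defs
  imports Main "HOL-Library.Multiset"
begin

datatype ssub = SCheck | SZero | SSnd ssub | SRcv ssub

type_synonym sproc = "ssub multiset"

inductive sstep :: "sproc \<Rightarrow> sproc \<Rightarrow> bool" where
  "sstep (add_mset (SSnd u1) (add_mset (SRcv u2) P)) (add_mset u1 (add_mset u2 P))"

definition ssuccessful :: "sproc \<Rightarrow> bool" where
  "ssuccessful P \<longleftrightarrow> SCheck \<in># P"

definition smay :: "sproc \<Rightarrow> bool" where
  "smay P \<longleftrightarrow> (\<exists>Q. sstep\<^sup>*\<^sup>* P Q \<and> ssuccessful Q)"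

definition smust :: "sproc \<Rightarrow> bool" where
  "smust P \<longleftrightarrow> (\<forall>Q. sstep\<^sup>*\<^sup>* P Q \<longrightarrow> smay Q)"

text \<open>Lock actions P_i, T_i. Lock states: C i = True means full, False means empty.\<close>
datatype lact = LP nat | LT nat

datatype lsub = LCheck | LZero | LAct lact lsub

type_synonym lproc = "lsub multiset"
type_synonym lstate = "lproc \<times> (nat \<Rightarrow> bool)"

inductive lstep :: "lstate \<Rightarrow> lstate \<Rightarrow> bool" where
  lstepP: "\<not> C i \<Longrightarrow> lstep (add_mset (LAct (LP i) u) P, C) (add_mset u P, C(i := True))"
| lstepT: "lstep (add_mset (LAct (LT i) u) P, C) (add_mset u P, C(i := False))"

definition lsuccessful :: "lstate \<Rightarrow> bool" where
  "lsuccessful S \<longleftrightarrow> LCheck \<in># fst S"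

definition lmay_state :: "lstate \<Rightarrow> bool" where
  "lmay_state S \<longleftrightarrow> (\<exists>S'. lstep\<^sup>*\<^sup>* S S' \<and> lsuccessful S')"

definition lmust_state :: "lstate \<Rightarrow> bool" where
  "lmust_state S \<longleftrightarrow> (\<forall>S'. lstep\<^sup>*\<^sup>* S S' \<longrightarrow> lmay_state S')"

definition lmay :: "(nat \<Rightarrow> bool) \<Rightarrow> lproc \<Rightarrow> bool" where
  "lmay IS P \<longleftrightarrow> lmay_state (P, IS)"

definition lmust :: "(nat \<Rightarrow> bool) \<Rightarrow> lproc \<Rightarrow> bool" where
  "lmust IS P \<longleftrightarrow> lmust_state (P, IS)"

definition prefix_word :: "lact list \<Rightarrow> lsub \<Rightarrow> lsub" where
  "prefix_word w u = foldr LAct w u"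

fun tr_sub :: "lact list \<Rightarrow> lact list \<Rightarrow> ssub \<Rightarrow> lsub" where
  "tr_sub ws wr SZero = LZero"
| "tr_sub ws wr SCheck = LCheck"
| "tr_sub ws wr (SSnd u) = prefix_word ws (tr_sub ws wr u)"
| "tr_sub ws wr (SRcv u) = prefix_word wr (tr_sub ws wr u)"

definition tr_proc :: "lact list \<Rightarrow> lact list \<Rightarrow> sproc \<Rightarrow> lproc" where
  "tr_proc ws wr P = image_mset (tr_sub ws wr) P"

definition word_over :: "nat \<Rightarrow> lact list \<Rightarrow> bool" where
  "word_over k w \<longleftrightarrow> (\<forall>a \<in> set w. \<exists>i. 1 \<le> i \<and> i \<le> k \<and> (a = LP i \<or> a = LT i))"

text \<open>Correct translation into LOCKSIMPLE_{k,IS}, given by words tau(!) = ws, tau(?) = wr.\<close>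
definition correct_translation :: "nat \<Rightarrow> (nat \<Rightarrow> bool) \<Rightarrow> lact list \<Rightarrow> lact list \<Rightarrow> bool" where
  "correct_translation k IS ws wr \<longleftrightarrow>
     word_over k ws \<and> word_over k wr \<and>
     (\<forall>P. (smay P \<longleftrightarrow> lmay IS (tr_proc ws wr P)) \<and>
          (smust P \<longleftrightarrow> lmust IS (tr_proc ws wr P)))"

end

theory Submission
  imports Defs
begin

text \<open>A single subprocess \<open>!\<checkmark>\<close> has no communication partner, so it is not may-convergent;
  correctness therefore forces \<open>\<tau>(!)\<checkmark>\<close>, run alone from \<open>IS\<close>, to get stuck before reaching
  \<open>\<checkmark>\<close>, and likewise for \<open>?\<close>. With one lock, a word gets stuck only at a \<open>P\<^sub>1\<close> met while the
  lock is full: either at the first letter (when \<open>IS\<close> is full) or right after another \<open>P\<^sub>1\<close>.\<close>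

lemma smay_singleton_iff: "smay {#u#} \<longleftrightarrow> u = SCheck"
proof
  assume "smay {#u#}"
  then obtain Q where reach: "sstep\<^sup>*\<^sup>* {#u#} Q" and "ssuccessful Q"
    unfolding smay_def by blast
  have no_step: "\<not> sstep {#u#} Q'" for Q'
  proof
    assume "sstep {#u#} Q'"
    then show False
      by cases simp
  qed
  from reach have "Q = {#u#}"
  proof (cases rule: converse_rtranclpE)
    case base
    then show ?thesis by simp
  next
    case (step Q')
    with no_step show ?thesis by blast
  qed
  with \<open>ssuccessful Q\<close> show "u = SCheck"
    by (simp add: ssuccessful_def)
next
  assume "u = SCheck"
  then show "smay {#u#}"
    unfolding smay_def ssuccessful_def by (intro exI[of _ "{#u#}"]) simp
qed

fun word_executable :: "(nat \<Rightarrow> bool) \<Rightarrow> lact list \<Rightarrow> bool" where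
  "word_executable C [] = True"
| "word_executable C (LP i # w) = (\<not> C i \<and> word_executable (C(i := True)) w)"
| "word_executable C (LT i # w) = word_executable (C(i := False)) w"

lemma lstep_prefix_word:
  assumes "word_executable C w"
  shows "\<exists>C'. lstep\<^sup>*\<^sup>* (add_mset (prefix_word w u) P, C) (add_mset u P, C')"
  using assms
proof (induction C w rule: word_executable.induct)
  case (1 C)
  then show ?case
    by (auto simp: prefix_word_def)
next
  case (2 C i w)
  have "\<exists>C'. lstep\<^sup>*\<^sup>* (add_mset (prefix_word w u) P, C(i := True)) (add_mset u P, C')"
    using "2.IH" "2.prems" by (simp add: fun_upd_def)
  then obtain C' where "lstep\<^sup>*\<^sup>* (add_mset (prefix_word w u) P, C(i := True)) (add_mset u P, C')"
    by blast
  moreover have "lstep (add_mset (prefix_word (LP i # w) u) P, C)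
      (add_mset (prefix_word w u) P, C(i := True))"
    using "2.prems" lstepP by (simp add: prefix_word_def)
  ultimately show ?case
    by (meson converse_rtranclp_into_rtranclp)
next
  case (3 C i w)
  have "\<exists>C'. lstep\<^sup>*\<^sup>* (add_mset (prefix_word w u) P, C(i := False)) (add_mset u P, C')"
    using "3.IH" "3.prems" by (simp add: fun_upd_def)
  then obtain C' where "lstep\<^sup>*\<^sup>* (add_mset (prefix_word w u) P, C(i := False)) (add_mset u P, C')"
    by blast
  moreover have "lstep (add_mset (prefix_word (LT i # w) u) P, C)
      (add_mset (prefix_word w u) P, C(i := False))"
    using lstepT by (simp add: prefix_word_def)
  ultimately show ?case
    by (meson converse_rtranclp_into_rtranclp)
qed

lemma lmay_prefix_word_LCheck:
  assumes "word_executable IS w"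
  shows "lmay IS {#prefix_word w LCheck#}"
proof -
  obtain C' where "lstep\<^sup>*\<^sup>* ({#prefix_word w LCheck#}, IS) ({#LCheck#}, C')"
    using lstep_prefix_word[OF assms, where P = "{#}"] by blast
  then show ?thesis
    unfolding lmay_def lmay_state_def lsuccessful_def
    by (intro exI[of _ "({#LCheck#}, C')"]) simp
qed

lemma word_executable_single_lock:
  assumes "set w \<subseteq> {LP i, LT i}"
    and "\<not> (\<exists>u v. w = u @ [LP i, LP i] @ v)"
    and "(\<exists>rest. w = LP i # rest) \<longrightarrow> \<not> C i"
  shows "word_executable C w"
  using assms
proof (induction w arbitrary: C)
  case Nil
  then show ?case by simp
next
  case (Cons a w)
  have no_factor: "\<not> (\<exists>u v. w = u @ [LP i, LP i] @ v)"
  proof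
    assume "\<exists>u v. w = u @ [LP i, LP i] @ v"
    then obtain u v where "a # w = (a # u) @ [LP i, LP i] @ v" by auto
    with Cons.prems(2) show False by blast
  qed
  have letters: "set w \<subseteq> {LP i, LT i}"
    using Cons.prems(1) by simp
  consider "a = LP i" | "a = LT i"
    using Cons.prems(1) by auto
  then show ?case
  proof cases
    case 1
    have "\<not> (\<exists>rest. w = LP i # rest)"
    proof
      assume "\<exists>rest. w = LP i # rest"
      then obtain rest where "a # w = [] @ [LP i, LP i] @ rest" using 1 by auto
      with Cons.prems(2) show False by blast
    qed
    then have "word_executable (C(i := True)) w"
      using Cons.IH[OF letters no_factor] by blast
    moreover have "\<not> C i"
      using Cons.prems(3) 1 by blast
    ultimately show ?thesis
      using 1 by simp
  next
    case 2
    have "word_executable (C(i := False)) w"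
      using Cons.IH[OF letters no_factor] by simp
    then show ?thesis
      using 2 by simp
  qed
qed

lemma word_over_1_iff: "word_over 1 w \<longleftrightarrow> set w \<subseteq> {LP 1, LT 1}"
  unfolding word_over_def by (auto simp: le_antisym)

theorem lemma3p1:
  fixes IS :: "nat \<Rightarrow> bool" and ws wr :: "lact list"
  assumes "correct_translation 1 IS ws wr"
  shows "\<forall>w \<in> {ws, wr}. (\<exists>rest. w = LP 1 # rest) \<or> (\<exists>u v. w = u @ [LP 1, LP 1] @ v)"
proof
  fix w
  assume w: "w \<in> {ws, wr}"
  have letters: "word_over 1 w"
    and may_reflected: "\<And>P. smay P \<longleftrightarrow> lmay IS (tr_proc ws wr P)"
    using assms w unfolding correct_translation_def by auto
  have "\<not> smay {#SSnd SCheck#}" "\<not> smay {#SRcv SCheck#}"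
    by (simp_all add: smay_singleton_iff)
  then have stuck: "\<not> lmay IS {#prefix_word w LCheck#}"
    using w by (auto simp: may_reflected tr_proc_def)
  show "(\<exists>rest. w = LP 1 # rest) \<or> (\<exists>u v. w = u @ [LP 1, LP 1] @ v)"
  proof (rule ccontr)
    assume "\<not> ?thesis"
    moreover have "set w \<subseteq> {LP 1, LT 1}"
      using letters by (simp only: word_over_1_iff)
    ultimately have "word_executable IS w"
      by (intro word_executable_single_lock) auto
    with stuck show False
      using lmay_prefix_word_LCheck by blast
  qed
qed

end
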